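(* Let $\mathcal{D}$ be a DCR graph and let $P$ be any process reachable from $\textsc{dcrpsi}(\mathcal{D})$ by a finite sequence of $\tau$-transitions in the unit context $\mathbf{1}$. Then every unguarded output prefix of $P$ (an output prefix not occurring underneath an input prefix, an output prefix, a $\mathbf{case}$ guard or a replication) has the form $\overline{m}\langle N\rangle.\mathbf{0}$ with the sent message $N$ equal to the frame $\mathcal{F}(P)$.
   Context: A DCR graph is a tuple $(E,M,\to\!\bullet,\bullet\!\to,\to\!\diamond,\to\!+,\to\!\%)$ where $E$ is a set of events (names from a nominal set), $M=(Ex',Re',In')$ is a triple of subsets of $E$ (the marking), and $\to\!\bullet,\bullet\!\to,\to\!\diamond,\to\!+,\to\!\%\subseteq E\times E$ are the condition, response, milestone, include and exclude relations. For a relation $\to$ write $e\!\to=\{f\mid e\to f\}$ and $\to\! e=\{f\mid f\to e\}$. dcrPsi instance: assertions are quadruples $(Ex,Re,In,G)$ with $Ex,Re,In\subseteq E$ and $G$ a natural number built from $0$ and successor $s(\cdot)$; terms are a distinguished channel name $m$ and assertions; conditions are triples $(Co,Mi,e)$ with $Co,Mi\subseteq E$, $e\in E$; channel equality is $=$; unit $\mathbf{1}=(\emptyset,\emptyset,\emptyset,0)$; composition: $(Ex,Re,In,G)\otimes(Ex',Re',In',G')$ equals the first argument if $G>G'$, the second if $G<G'$, and $(Ex\cup Ex',Re\cup Re',In\cup In',G)$ if $G=G'$; entailment: $(Ex,Re,In,G)\vdash(Co,Mi,e)$ iff $e\in In$, $In\cap Co\subseteq Ex$ and $In\cap Mi\cap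 Re=\emptyset$. Psi-calculus: processes $\mathbf{0}$, $(\!|\Psi|\!)$, $\overline{M}\langle N\rangle.P$, $\underline{M}(\lambda\tilde x)N.P$, $\mathbf{case}\ \tilde\varphi:\tilde P$, $P\mid Q$, $!P$. Frames: $\mathcal{F}((\!|\Psi|\!))=\Psi$, $\mathcal{F}(P\mid Q)=\mathcal{F}(P)\otimes\mathcal{F}(Q)$, frame of $\mathbf{0}$, prefixed, case and replicated processes is $\mathbf{1}$. Transitions $\Psi\triangleright P\xrightarrow{\alpha}P'$ are generated by: (Out) if $\Psi\vdash M\leftrightarrow K$ then $\Psi\triangleright\overline{M}\langle N\rangle.P\xrightarrow{\overline{K}N}P$; (In) if $\Psi\vdash M\leftrightarrow K$ then $\Psi\triangleright\underline{M}(\lambda\tilde y)N.P\xrightarrow{\underline{K}N[\tilde y:=\tilde L]}P[\tilde y:=\tilde L]$ for any terms $\tilde L$; (Case) if $\Psi\triangleright P_i\xrightarrow{\alpha}P'$ and $\Psi\vdash\varphi_i$ then $\Psi\triangleright\mathbf{case}\ \tilde\varphi:\tilde P\xrightarrow{\alpha}P'$; (Par) if $\Psi\otimes\mathcal{F}(Q)\triangleright P\xrightarrow{\alpha}P'$ then $\Psi\triangleright P\mid Q\xrightarrow{\alpha}P'\mid Q$, and symmetrically; (Rep) if $\Psi\triangleright P\mid !P\xrightarrow{\alpha}P'$ then $\Psi\triangleright !P\xrightarrow{\alpha}P'$; (Com) if $\mathcal{F}(P)=\Psi_P$, $\mathcal{F}(Q)=\Psi_Q$, $\Psi_Q\otimes\Psi\triangleright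 P\xrightarrow{\overline{M}N}P'$, $\Psi_P\otimes\Psi\triangleright Q\xrightarrow{\underline{K}N}Q'$ and $\Psi_Q\otimes\Psi_P\otimes\Psi\vdash M\leftrightarrow K$, then $\Psi\triangleright P\mid Q\xrightarrow{\tau}P'\mid Q'$, and symmetrically. Assertion processes and $\mathbf{0}$ have no transitions. Set-expressions in terms are identified with their values after substitution. Translation: $\textsc{dcrpsi}(\mathcal{D})=P_s\mid\big|_{e\in E}P_e$ with $P_s=(\!|(Ex',Re',In',0)|\!)\mid\overline{m}\langle(Ex',Re',In',0)\rangle.\mathbf{0}$ and $P_e=!\big(\mathbf{case}\ \varphi_e:\underline{m}(\lambda X_E,X_R,X_I,X_G)(X_E,X_R,X_I,X_G).(\overline{m}\langle U_e\rangle.\mathbf{0}\mid(\!|U_e|\!))\big)$, where $U_e=(X_E\cup\{e\},(X_R\setminus\{e\})\cup e\!\bullet\!\!\to,(X_I\setminus e\!\to\!\%)\cup e\!\to\!+,s(X_G))$ and $\varphi_e=(\to\!\bullet e,\to\!\diamond e,e)$. *)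

theory Defs
  imports Main
begin

record 'e dcr =
  events :: "'e set"
  mEx :: "'e set"
  mRe :: "'e set"
  mIn :: "'e set"
  condr :: "('e \<times> 'e) set"   (* f \<rightarrow>\<bullet> e  as (f,e) *)
  respr :: "('e \<times> 'e) set"   (* e \<bullet>\<rightarrow> f  as (e,f) *)
  milesr :: "('e \<times> 'e) set"  (* f \<rightarrow>\<diamond> e as (f,e) *)
  inclr :: "('e \<times> 'e) set"   (* e \<rightarrow>+ f as (e,f) *)
  exclr :: "('e \<times> 'e) set"   (* e \<rightarrow>% f as (e,f) *)

definition wf_dcr :: "'e dcr \<Rightarrow> bool" where
  "wf_dcr D \<longleftrightarrow> finite (events D)
     \<and> mEx D \<subseteq> events D \<and> mRe D \<subseteq> events D \<and> mIn D \<subseteq> events D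
     \<and> condr D \<subseteq> events D \<times> events D \<and> respr D \<subseteq> events D \<times> events D
     \<and> milesr D \<subseteq> events D \<times> events D \<and> inclr D \<subseteq> events D \<times> events D
     \<and> exclr D \<subseteq> events D \<times> events D"

definition succs :: "('e \<times> 'e) set \<Rightarrow> 'e \<Rightarrow> 'e set" where
  "succs r e = {f. (e, f) \<in> r}"

definition preds :: "('e \<times> 'e) set \<Rightarrow> 'e \<Rightarrow> 'e set" where
  "preds r e = {f. (f, e) \<in> r}"

text \<open>Assertions (Xe, Rr, Ii, G).\<close>
type_synonym 'e asn = "'e set \<times> 'e set \<times> 'e set \<times> nat"

datatype 'e tm = ChanM | Asrt "'e asn"

text \<open>Conditions (Co, Mi, e).\<close>
type_synonym 'e cnd = "'e set \<times> 'e set \<times> 'e"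

definition unit_asn :: "'e asn" where
  "unit_asn = ({}, {}, {}, 0)"

fun comp_asn :: "'e asn \<Rightarrow> 'e asn \<Rightarrow> 'e asn" where
  "comp_asn (Xe, Rr, Ii, G) (Xe', Rr', Ii', G') =
     (if G > G' then (Xe, Rr, Ii, G)
      else if G < G' then (Xe', Rr', Ii', G')
      else (Xe \<union> Xe', Rr \<union> Rr', Ii \<union> Ii', G))"

fun entails :: "'e asn \<Rightarrow> 'e cnd \<Rightarrow> bool" where
  "entails (Xe, Rr, Ii, G) (Co, Mi, e) \<longleftrightarrow>
     e \<in> Ii \<and> Ii \<inter> Co \<subseteq> Xe \<and> Ii \<inter> Mi \<inter> Rr = {}"

definition chaneq :: "'e asn \<Rightarrow> 'e tm \<Rightarrow> 'e tm \<Rightarrow> bool" where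
  "chaneq \<Psi> M K \<longleftrightarrow> M = K"

text \<open>An input \<open>Inp M N P\<close> binds the tuple of variables \<open>(X_E,X_R,X_I,X_G)\<close>;
  the pattern \<open>N\<close> and continuation \<open>P\<close> are given as functions of the values
  substituted for these variables (set expressions identified with their values).\<close>
datatype 'e proc =
    PNil
  | PAss "'e asn"
  | POut "'e tm" "'e tm" "'e proc"
  | PInp "'e tm" "'e asn \<Rightarrow> 'e tm" "'e asn \<Rightarrow> 'e proc"
  | PCase "('e cnd \<times> 'e proc) list"
  | PPar "'e proc" "'e proc"
  | PRep "'e proc"

fun frame :: "'e proc \<Rightarrow> 'e asn" where
  "frame (PAss \<Psi>) = \<Psi>"
| "frame (PPar P Q) = comp_asn (frame P) (frame Q)"
| "frame _ = unit_asn"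

datatype 'e act = AOut "'e tm" "'e tm" | AInp "'e tm" "'e tm" | ATau

inductive trans :: "'e asn \<Rightarrow> 'e proc \<Rightarrow> 'e act \<Rightarrow> 'e proc \<Rightarrow> bool" where
  Out: "chaneq \<Psi> M K \<Longrightarrow> trans \<Psi> (POut M N P) (AOut K N) P"
| In: "chaneq \<Psi> M K \<Longrightarrow> trans \<Psi> (PInp M N P) (AInp K (N L)) (P L)"
| Case: "i < length cs \<Longrightarrow> trans \<Psi> (snd (cs ! i)) \<alpha> P' \<Longrightarrow> entails \<Psi> (fst (cs ! i))
         \<Longrightarrow> trans \<Psi> (PCase cs) \<alpha> P'"
| ParL: "trans (comp_asn \<Psi> (frame Q)) P \<alpha> P' \<Longrightarrow> trans \<Psi> (PPar P Q) \<alpha> (PPar P' Q)"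
| ParR: "trans (comp_asn \<Psi> (frame P)) Q \<alpha> Q' \<Longrightarrow> trans \<Psi> (PPar P Q) \<alpha> (PPar P Q')"
| Rep: "trans \<Psi> (PPar P (PRep P)) \<alpha> P' \<Longrightarrow> trans \<Psi> (PRep P) \<alpha> P'"
| ComL: "trans (comp_asn (frame Q) \<Psi>) P (AOut M N) P'
         \<Longrightarrow> trans (comp_asn (frame P) \<Psi>) Q (AInp K N) Q'
         \<Longrightarrow> chaneq (comp_asn (comp_asn (frame Q) (frame P)) \<Psi>) M K
         \<Longrightarrow> trans \<Psi> (PPar P Q) ATau (PPar P' Q')"
| ComR: "trans (comp_asn (frame P) \<Psi>) Q (AOut M N) Q'
         \<Longrightarrow> trans (comp_asn (frame Q) \<Psi>) P (AInp K N) P'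
         \<Longrightarrow> chaneq (comp_asn (comp_asn (frame P) (frame Q)) \<Psi>) M K
         \<Longrightarrow> trans \<Psi> (PPar P Q) ATau (PPar P' Q')"

definition tau_reach :: "'e proc \<Rightarrow> 'e proc \<Rightarrow> bool" where
  "tau_reach = (\<lambda>P Q. trans unit_asn P ATau Q)\<^sup>*\<^sup>*"

fun unguarded_outputs :: "'e proc \<Rightarrow> ('e tm \<times> 'e tm \<times> 'e proc) set" where
  "unguarded_outputs (POut M N Q) = {(M, N, Q)}"
| "unguarded_outputs (PPar P Q) = unguarded_outputs P \<union> unguarded_outputs Q"
| "unguarded_outputs _ = {}"

fun bigpar :: "'e proc list \<Rightarrow> 'e proc" where
  "bigpar [] = PNil"
| "bigpar [P] = P"
| "bigpar (P # Ps) = PPar P (bigpar Ps)"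

definition U_upd :: "'e dcr \<Rightarrow> 'e \<Rightarrow> 'e asn \<Rightarrow> 'e asn" where
  "U_upd D e X = (case X of (XE, XR, XI, XG) \<Rightarrow>
     (XE \<union> {e}, (XR - {e}) \<union> succs (respr D) e,
      (XI - succs (exclr D) e) \<union> succs (inclr D) e, Suc XG))"

definition phi_e :: "'e dcr \<Rightarrow> 'e \<Rightarrow> 'e cnd" where
  "phi_e D e = (preds (condr D) e, preds (milesr D) e, e)"

definition P_s :: "'e dcr \<Rightarrow> 'e proc" where
  "P_s D = PPar (PAss (mEx D, mRe D, mIn D, 0))
                (POut ChanM (Asrt (mEx D, mRe D, mIn D, 0)) PNil)"

definition P_e :: "'e dcr \<Rightarrow> 'e \<Rightarrow> 'e proc" where
  "P_e D e = PRep (PCase [(phi_e D e,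
      PInp ChanM (\<lambda>X. Asrt X)
        (\<lambda>X. PPar (POut ChanM (Asrt (U_upd D e X)) PNil) (PAss (U_upd D e X))))])"

text \<open>The parallel composition over E is taken along an enumeration \<open>es\<close> of E.\<close>
definition dcrpsi :: "'e dcr \<Rightarrow> 'e list \<Rightarrow> 'e proc" where
  "dcrpsi D es = PPar (P_s D) (bigpar (map (P_e D) es))"

end

theory Submission
  imports Defs "HOL-Library.Multiset"
begin

text \<open>Every reachable process is a parallel composition of assertions, replicated event
  processes and exactly one output \<open>m\<langle>A\<rangle>.0\<close>, where \<open>A\<close> is one of the unguarded assertions
  and has strictly the largest generation counter among them. A \<open>\<tau>\<close>-step consumes this
  output and adds both an output and an assertion of \<open>U\<^sub>e(A)\<close>, whose generation is one higher,
  so the invariant persists. Since composition of assertions keeps the one of larger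
  generation, the frame is \<open>A\<close>.\<close>

definition generation :: "'e asn \<Rightarrow> nat" where
  "generation X = snd (snd (snd X))"

lemma generation_U_upd [simp]: "generation (U_upd D e X) = Suc (generation X)"
  by (cases X) (simp add: U_upd_def generation_def)

lemma comp_asn_absorb_left:
  "Y = unit_asn \<or> generation Y < generation X \<Longrightarrow> comp_asn X Y = X"
  by (cases X; cases Y) (auto simp: generation_def unit_asn_def)

lemma comp_asn_absorb_right:
  "Y = unit_asn \<or> generation Y < generation X \<Longrightarrow> comp_asn Y X = X"
  by (cases X; cases Y) (auto simp: generation_def unit_asn_def)

lemma comp_asn_below:
  assumes "X = unit_asn \<or> generation X < g" and "Y = unit_asn \<or> generation Y < g"
  shows "comp_asn X Y = unit_asn \<or> generation (comp_asn X Y) < g"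
  using assms by (cases X; cases Y) (auto simp: generation_def unit_asn_def)

fun assertions :: "'e proc \<Rightarrow> 'e asn multiset" where
  "assertions (PAss \<Psi>) = {#\<Psi>#}"
| "assertions (PPar P Q) = assertions P + assertions Q"
| "assertions _ = {#}"

lemma frame_below:
  "\<forall>X\<in>#assertions P. generation X < g \<Longrightarrow> frame P = unit_asn \<or> generation (frame P) < g"
proof (induction P)
  case (PPar P Q)
  then show ?case using comp_asn_below[of "frame P" g "frame Q"] by simp
qed (auto simp: unit_asn_def)

definition dominant :: "'e asn \<Rightarrow> 'e asn multiset \<Rightarrow> bool" where
  "dominant A M \<longleftrightarrow> A \<in># M \<and> (\<forall>X\<in>#M - {#A#}. generation X < generation A)"

lemma dominant_add_mset:
  assumes "dominant A M" and "generation A < generation B"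
  shows "dominant B (add_mset B M)"
proof -
  have "generation X < generation B" if "X \<in># M" for X
  proof (cases "X = A")
    case False
    with that have "X \<in># M - {#A#}"
      by (simp add: in_diff_count)
    with assms(1) have "generation X < generation A"
      by (simp add: dominant_def)
    with assms(2) show ?thesis by simp
  qed (use assms(2) in simp)
  then show ?thesis by (simp add: dominant_def)
qed

lemma dominant_union:
  assumes "dominant A (M + N)" and "A \<in># N"
  shows "dominant A N" and "\<forall>X\<in>#M. generation X < generation A"
proof -
  have "M + N - {#A#} = M + (N - {#A#})"
    using assms(2) by (rule diff_union_single_conv)
  with assms(1) have lower: "\<forall>X\<in>#M + (N - {#A#}). generation X < generation A"
    unfolding dominant_def by metis
  with assms(2) show "dominant A N"
    unfolding dominant_def by (metis union_iff)
  from lower show "\<forall>X\<in>#M. generation X < generation A"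
    by (metis union_iff)
qed

lemma frame_eq_dominant: "dominant A (assertions P) \<Longrightarrow> frame P = A"
proof (induction P)
  case (PPar P Q)
  from PPar.prems consider "A \<in># assertions P" | "A \<in># assertions Q"
    by (auto simp: dominant_def)
  then show ?case
  proof cases
    case 1
    with PPar.prems have "dominant A (assertions Q + assertions P)"
      by (simp add: add.commute)
    from dominant_union[OF this 1] have "frame P = A"
      and "frame Q = unit_asn \<or> generation (frame Q) < generation A"
      using PPar.IH(1) frame_below by blast+
    then show ?thesis by (simp add: comp_asn_absorb_left)
  next
    case 2
    from PPar.prems have "dominant A (assertions P + assertions Q)" by simp
    from dominant_union[OF this 2] have "frame Q = A"
      and "frame P = unit_asn \<or> generation (frame P) < generation A"
      using PPar.IH(2) frame_below by blast+
    then show ?thesis by (simp add: comp_asn_absorb_right)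
  qed
qed (simp_all add: dominant_def)

definition event_body :: "'e dcr \<Rightarrow> 'e \<Rightarrow> 'e asn \<Rightarrow> 'e proc" where
  "event_body D e X = PPar (POut ChanM (Asrt (U_upd D e X)) PNil) (PAss (U_upd D e X))"

definition event_case :: "'e dcr \<Rightarrow> 'e \<Rightarrow> ('e cnd \<times> 'e proc) list" where
  "event_case D e = [(phi_e D e, PInp ChanM Asrt (event_body D e))]"

lemma P_e_eq: "P_e D e = PRep (PCase (event_case D e))"
  by (simp add: P_e_def event_case_def event_body_def [abs_def])

fun dcr_form :: "'e dcr \<Rightarrow> 'e proc \<Rightarrow> bool" where
  "dcr_form D (POut M N Q) \<longleftrightarrow> M = ChanM \<and> Q = PNil"
| "dcr_form D (PInp M N Q) \<longleftrightarrow> False"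
| "dcr_form D (PCase cs) \<longleftrightarrow> (\<exists>e. cs = event_case D e)"
| "dcr_form D (PPar P Q) \<longleftrightarrow> dcr_form D P \<and> dcr_form D Q"
| "dcr_form D (PRep P) \<longleftrightarrow> (\<exists>e. P = PCase (event_case D e))"
| "dcr_form D _ \<longleftrightarrow> True"

fun output_msgs :: "'e proc \<Rightarrow> 'e tm multiset" where
  "output_msgs (POut M N Q) = {#N#}"
| "output_msgs (PPar P Q) = output_msgs P + output_msgs Q"
| "output_msgs _ = {#}"

lemma unguarded_outputs_dcr_form:
  "dcr_form D P \<Longrightarrow> unguarded_outputs P = (\<lambda>N. (ChanM, N, PNil)) ` set_mset (output_msgs P)"
  by (induction P) auto

text \<open>A \<open>\<tau>\<close>-step replaces an output of some \<open>X\<close> by an output of \<open>U\<^sub>e(X)\<close>; this is stated by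
  adding the consumed message on the other side, avoiding multiset subtraction.\<close>

definition trans_effect :: "'e dcr \<Rightarrow> 'e proc \<Rightarrow> 'e act \<Rightarrow> 'e proc \<Rightarrow> bool" where
  "trans_effect D P \<alpha> P' \<longleftrightarrow> (case \<alpha> of
     AOut M N \<Rightarrow> output_msgs P = add_mset N (output_msgs P') \<and> assertions P' = assertions P
   | AInp K N \<Rightarrow> (\<exists>e X. N = Asrt X
       \<and> output_msgs P' = add_mset (Asrt (U_upd D e X)) (output_msgs P)
       \<and> assertions P' = add_mset (U_upd D e X) (assertions P))
   | ATau \<Rightarrow> (\<exists>e X.
       add_mset (Asrt (U_upd D e X)) (output_msgs P) = add_mset (Asrt X) (output_msgs P')
       \<and> assertions P' = add_mset (U_upd D e X) (assertions P)))"

lemma trans_effect_communication: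
  assumes "trans_effect D P (AOut M N) P'" and "trans_effect D Q (AInp K N) Q'"
  shows "trans_effect D (PPar P Q) ATau (PPar P' Q')"
    and "trans_effect D (PPar Q P) ATau (PPar Q' P')"
proof -
  from assms obtain e X where
    "output_msgs P = add_mset (Asrt X) (output_msgs P')" "assertions P' = assertions P"
    "output_msgs Q' = add_mset (Asrt (U_upd D e X)) (output_msgs Q)"
    "assertions Q' = add_mset (U_upd D e X) (assertions Q)"
    by (auto simp: trans_effect_def)
  then have "add_mset (Asrt (U_upd D e X)) (output_msgs (PPar P Q))
      = add_mset (Asrt X) (output_msgs (PPar P' Q'))"
    and "add_mset (Asrt (U_upd D e X)) (output_msgs (PPar Q P))
      = add_mset (Asrt X) (output_msgs (PPar Q' P'))"
    and "assertions (PPar P' Q') = add_mset (U_upd D e X) (assertions (PPar P Q))"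
    and "assertions (PPar Q' P') = add_mset (U_upd D e X) (assertions (PPar Q P))"
    by (simp_all add: add_ac)
  then show "trans_effect D (PPar P Q) ATau (PPar P' Q')"
    and "trans_effect D (PPar Q P) ATau (PPar Q' P')"
    unfolding trans_effect_def act.case by blast+
qed

lemma trans_event_input:
  assumes "trans \<Psi> (PInp ChanM Asrt (event_body D e)) \<alpha> P'"
  shows "dcr_form D P' \<and> trans_effect D (PCase (event_case D e)) \<alpha> P'"
  using assms by cases (auto simp: event_body_def trans_effect_def)

lemma dcr_form_trans:
  "trans \<Psi> P \<alpha> P' \<Longrightarrow> dcr_form D P \<Longrightarrow> dcr_form D P' \<and> trans_effect D P \<alpha> P'"
proof (induction rule: trans.induct)
  case (Out \<Psi> M K N P)
  then show ?case by (simp add: trans_effect_def)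
next
  case (In \<Psi> M K N P L)
  then show ?case by simp
next
  case (Case i cs \<Psi> \<alpha> P')
  then obtain e where "cs = event_case D e" by auto
  with Case.hyps(1,2) show ?case
    using trans_event_input by (simp add: event_case_def)
next
  case (ParL \<Psi> Q P \<alpha> P')
  then show ?case by (cases \<alpha>) (auto simp: trans_effect_def add_ac)
next
  case (ParR \<Psi> P Q \<alpha> Q')
  then show ?case by (cases \<alpha>) (auto simp: trans_effect_def add_ac)
next
  case (Rep \<Psi> P \<alpha> P')
  then obtain e where P: "P = PCase (event_case D e)" by auto
  then have "dcr_form D (PPar P (PRep P))" by auto
  with Rep.IH P show ?case by (cases \<alpha>) (simp_all add: trans_effect_def)
next
  case (ComL Q \<Psi> P M N P' K Q')
  then show ?case by (auto intro: trans_effect_communication)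
next
  case (ComR P \<Psi> Q M N Q' K P')
  then show ?case by (auto intro: trans_effect_communication)
qed

definition dcr_invariant :: "'e dcr \<Rightarrow> 'e proc \<Rightarrow> bool" where
  "dcr_invariant D P \<longleftrightarrow> dcr_form D P
     \<and> (\<exists>A. output_msgs P = {#Asrt A#} \<and> dominant A (assertions P))"

lemma dcr_invariant_dcrpsi: "dcr_invariant D (dcrpsi D es)"
proof -
  have "dcr_form D (bigpar (map (P_e D) es)) \<and> output_msgs (bigpar (map (P_e D) es)) = {#}
      \<and> assertions (bigpar (map (P_e D) es)) = {#}"
    by (induction es rule: induct_list012) (auto simp: P_e_eq)
  then show ?thesis
    by (auto simp: dcr_invariant_def dcrpsi_def P_s_def dominant_def)
qed

lemma dcr_invariant_tau_step:
  assumes "dcr_invariant D P" and "trans unit_asn P ATau P'"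
  shows "dcr_invariant D P'"
proof -
  from assms(1) obtain A where form: "dcr_form D P"
    and out: "output_msgs P = {#Asrt A#}" and dom: "dominant A (assertions P)"
    unfolding dcr_invariant_def by blast
  from dcr_form_trans[OF assms(2) form] out obtain e X where "dcr_form D P'"
    and swap: "{#Asrt (U_upd D e X), Asrt A#} = add_mset (Asrt X) (output_msgs P')"
    and asms': "assertions P' = add_mset (U_upd D e X) (assertions P)"
    by (auto simp: trans_effect_def)
  have "X \<noteq> U_upd D e X"
    using generation_U_upd[of D e X] by (metis n_not_Suc_n)
  with swap have "X = A" and "output_msgs P' = {#Asrt (U_upd D e A)#}"
    by (auto simp: add_eq_conv_diff)
  moreover have "dominant (U_upd D e A) (assertions P')"
    using dom asms' \<open>X = A\<close> by (simp add: dominant_add_mset)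
  ultimately show ?thesis
    using \<open>dcr_form D P'\<close> by (auto simp: dcr_invariant_def)
qed

lemma dcr_invariant_tau_reach:
  "tau_reach P P' \<Longrightarrow> dcr_invariant D P \<Longrightarrow> dcr_invariant D P'"
  unfolding tau_reach_def
  by (induction rule: rtranclp_induct) (auto intro: dcr_invariant_tau_step)

theorem mainTheorem7:
  fixes D :: "'e dcr" and es :: "'e list" and P :: "'e proc"
  assumes "wf_dcr D"
    and "distinct es" and "set es = events D"
    and "tau_reach (dcrpsi D es) P"
  shows "\<forall>(M, N, Q) \<in> unguarded_outputs P. M = ChanM \<and> Q = PNil \<and> N = Asrt (frame P)"
proof -
  \<comment> \<open>The invariant holds for every \<open>D\<close> and \<open>es\<close>.\<close>
  from dcr_invariant_tau_reach[OF assms(4) dcr_invariant_dcrpsi] obtain A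
    where "dcr_form D P" "output_msgs P = {#Asrt A#}" "dominant A (assertions P)"
    unfolding dcr_invariant_def by blast
  then have "unguarded_outputs P = {(ChanM, Asrt A, PNil)}" and "frame P = A"
    by (simp_all add: unguarded_outputs_dcr_form frame_eq_dominant)
  then show ?thesis by simp
qed

end
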